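(* The Euler characteristic $\chi$ is a ring homomorphism from the strong ring $(\mathcal{G},\oplus,\boxtimes)$ to $\mathbb{Z}$; that is, $\chi(0)=0$, $\chi(K_1)=1$, $\chi(G\oplus H)=\chi(G)+\chi(H)$ and $\chi(G\boxtimes H)=\chi(G)\chi(H)$ for all $G,H\in\mathcal{G}$.
   Context: Graphs are finite simple graphs up to isomorphism. $G\oplus H$ is the disjoint union. The strong product $G\boxtimes H$ of $G=(V,E)$, $H=(W,F)$ has vertex set $V\times W$, distinct $(a,b),(c,d)$ adjacent iff ($a=c$ and $\{b,d\}\in F$) or ($b=d$ and $\{a,c\}\in E$) or ($\{a,c\}\in E$ and $\{b,d\}\in F$). $\mathcal{G}$ is the Grothendieck group of the monoid (graphs, $\oplus$), elements $A-B$ with $A-B=C-D$ iff $A\oplus D\oplus K=B\oplus C\oplus K$ for some graph $K$; the strong ring is $\mathcal{G}$ with $\boxtimes$ extended bilinearly, zero the empty graph and one $K_1$. For a graph $G$, $\chi(G)=\sum_{k\ge0}(-1)^k v_k(G)$ where $v_k(G)$ is the number of complete subgraphs $K_{k+1}$ of $G$, and $\chi(A-B)=\chi(A)-\chi(B)$. *)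

theory Defs
  imports Main "HOL-Library.Nat_Bijection"
begin

text \<open>Graphs are considered
  up to isomorphism (relation graph_iso).\<close>

type_synonym graph = "nat set \<times> nat set set"

definition wf_graph :: "graph \<Rightarrow> bool" where
  "wf_graph G \<longleftrightarrow> finite (fst G) \<and>
     (\<forall>e\<in>snd G. \<exists>a b. a \<in> fst G \<and> b \<in> fst G \<and> a \<noteq> b \<and> e = {a, b})"

definition graph_iso :: "graph \<Rightarrow> graph \<Rightarrow> bool" where
  "graph_iso G H \<longleftrightarrow> (\<exists>f. bij_betw f (fst G) (fst H) \<and>
     (\<forall>a\<in>fst G. \<forall>b\<in>fst G. {a, b} \<in> snd G \<longleftrightarrow> {f a, f b} \<in> snd H))"

definition empty_graph :: graph where
  "empty_graph = ({}, {})"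

definition K1 :: graph where
  "K1 = ({0}, {})"

text \<open>Disjoint union: the two vertex sets are tagged by even / odd numbers.\<close>
definition dunion :: "graph \<Rightarrow> graph \<Rightarrow> graph" (infixl "\<oplus>\<^sub>g" 65) where
  "dunion G H =
     ((\<lambda>x. 2 * x) ` fst G \<union> (\<lambda>x. 2 * x + 1) ` fst H,
      (\<lambda>e. (\<lambda>x. 2 * x) ` e) ` snd G \<union> (\<lambda>e. (\<lambda>x. 2 * x + 1) ` e) ` snd H)"

text \<open>Strong product: vertex (a,b) is encoded as prod_encode (a,b).\<close>
definition sprod :: "graph \<Rightarrow> graph \<Rightarrow> graph" (infixl "\<boxtimes>\<^sub>g" 70) where
  "sprod G H =
     (prod_encode ` (fst G \<times> fst H),
      {{prod_encode (a, b), prod_encode (c, d)} | a b c d.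
          a \<in> fst G \<and> c \<in> fst G \<and> b \<in> fst H \<and> d \<in> fst H \<and> (a, b) \<noteq> (c, d) \<and>
          ((a = c \<and> {b, d} \<in> snd H) \<or> (b = d \<and> {a, c} \<in> snd G) \<or>
           ({a, c} \<in> snd G \<and> {b, d} \<in> snd H))})"

text \<open>v_k(G): number of complete subgraphs K_{k+1} of G (each is determined by its
  vertex set, a (k+1)-element set of pairwise adjacent vertices).\<close>
definition num_cliques :: "nat \<Rightarrow> graph \<Rightarrow> nat" where
  "num_cliques k G = card {C. C \<subseteq> fst G \<and> card C = k + 1 \<and>
      (\<forall>a\<in>C. \<forall>b\<in>C. a \<noteq> b \<longrightarrow> {a, b} \<in> snd G)}"

text \<open>chi(G) = sum_{k \<ge> 0} (-1)^k v_k(G); terms with k \<ge> card V vanish.\<close>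
definition euler_char :: "graph \<Rightarrow> int" where
  "euler_char G = (\<Sum>k\<le>card (fst G). (-1) ^ k * int (num_cliques k G))"

text \<open>Grothendieck group: an element A - B is represented by the pair (A, B).\<close>
type_synonym ggraph = "graph \<times> graph"

definition wf_gg :: "ggraph \<Rightarrow> bool" where
  "wf_gg p \<longleftrightarrow> wf_graph (fst p) \<and> wf_graph (snd p)"

definition gg_eq :: "ggraph \<Rightarrow> ggraph \<Rightarrow> bool" where
  "gg_eq p q \<longleftrightarrow> (\<exists>K. wf_graph K \<and>
     graph_iso (fst p \<oplus>\<^sub>g snd q \<oplus>\<^sub>g K) (snd p \<oplus>\<^sub>g fst q \<oplus>\<^sub>g K))"

definition gg_zero :: ggraph where "gg_zero = (empty_graph, empty_graph)"
definition gg_one :: ggraph where "gg_one = (K1, empty_graph)"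

definition gg_add :: "ggraph \<Rightarrow> ggraph \<Rightarrow> ggraph" where
  "gg_add p q = (fst p \<oplus>\<^sub>g fst q, snd p \<oplus>\<^sub>g snd q)"

text \<open>Bilinear extension of the strong product: (A-B)(C-D) = (AC + BD) - (AD + BC).\<close>
definition gg_mul :: "ggraph \<Rightarrow> ggraph \<Rightarrow> ggraph" where
  "gg_mul p q = ((fst p \<boxtimes>\<^sub>g fst q) \<oplus>\<^sub>g (snd p \<boxtimes>\<^sub>g snd q),
                 (fst p \<boxtimes>\<^sub>g snd q) \<oplus>\<^sub>g (snd p \<boxtimes>\<^sub>g fst q))"

definition gg_chi :: "ggraph \<Rightarrow> int" where
  "gg_chi p = euler_char (fst p) - euler_char (snd p)"

end

theory Submission
  imports Defs "HOL-Library.FuncSet"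
begin

(*
  Written as a sum over the nonempty cliques C of G, chi(G) = - (\<Sum>C. (-1)^|C|).  In this form
  isomorphism invariance and additivity are immediate: an induced embedding maps the cliques of G
  bijectively onto the cliques inside its image, and every clique of G \<oplus> H lies in one summand.

  A set S of vertex pairs is a clique of G \<boxtimes> H iff both projections A and B of S are cliques.
  Grouping the cliques of the product by (A, B) reduces multiplicativity to the identity
  \<Sum>S. (-1)^|S| = - (-1)^(|A| + |B|), summed over the relations S \<subseteq> A \<times> B with projections
  exactly A and B.  Dropping the condition on the second projection, a relation becomes an
  independent choice of a nonempty fibre over each point of A, so the alternating sum factors as
  (-1)^|A|; Moebius inversion over the subsets of B then gives the identity.
*)

section \<open>Alternating sums over relations\<close>

lemma sum_Pow_neg_one_power:
  assumes "finite B" "B \<noteq> {}"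
  shows "(\<Sum>T\<in>Pow B. (-1::'a::comm_ring_1) ^ card T) = 0"
  using prod_diff_conv_sum[OF assms(1), of "\<lambda>_. 1" "\<lambda>_. 1"] assms
  by (simp add: zero_power card_gt_0_iff)

lemma sum_Pow_nonempty_neg_one_power:
  assumes "finite B" "B \<noteq> {}"
  shows "(\<Sum>T\<in>Pow B - {{}}. (-1::'a::comm_ring_1) ^ card T) = -1"
proof -
  have "(\<Sum>T\<in>Pow B. (-1::'a) ^ card T) = 1 + (\<Sum>T\<in>Pow B - {{}}. (-1) ^ card T)"
    using assms by (simp add: sum.remove[of _ "{}"])
  then show ?thesis
    using sum_Pow_neg_one_power[OF assms, where 'a='a] by (simp add: eq_neg_iff_add_eq_0 add.commute)
qed

lemma sum_Pow_neg_one_power_diff: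
  assumes "finite B" "B \<noteq> {}"
  shows "(\<Sum>T\<in>Pow B. (-1::'a::comm_ring_1) ^ (card B - card T)) = 0"
  using prod_diff_conv_sum'[OF assms(1), of "\<lambda>_. 1" "\<lambda>_. 1"] assms
  by (simp add: zero_power card_gt_0_iff)

definition left_total_rels :: "'a set \<Rightarrow> 'b set \<Rightarrow> ('a \<times> 'b) set set" where
  "left_total_rels A B = {S. S \<subseteq> A \<times> B \<and> fst ` S = A}"

definition bitotal_rels :: "'a set \<Rightarrow> 'b set \<Rightarrow> ('a \<times> 'b) set set" where
  "bitotal_rels A B = {S \<in> left_total_rels A B. snd ` S = B}"

lemma bitotal_rels_eq: "bitotal_rels A B = {S. fst ` S = A \<and> snd ` S = B}"
  using subset_fst_snd by (auto simp: bitotal_rels_def left_total_rels_def)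

lemma finite_left_total_rels: "finite A \<Longrightarrow> finite B \<Longrightarrow> finite (left_total_rels A B)"
  by (rule finite_subset[of _ "Pow (A \<times> B)"]) (auto simp: left_total_rels_def)

lemma left_total_rels_empty: "A \<noteq> {} \<Longrightarrow> left_total_rels A {} = {}"
  by (auto simp: left_total_rels_def)

lemma bij_betw_Sigma_left_total_rels:
  "bij_betw (Sigma A) (PiE A (\<lambda>_. Pow B - {{}})) (left_total_rels A B)"
proof (rule bij_betw_byWitness[where f' = "\<lambda>S. \<lambda>a\<in>A. S `` {a}"])
  show "\<forall>g\<in>PiE A (\<lambda>_. Pow B - {{}}). (\<lambda>a\<in>A. Sigma A g `` {a}) = g"
    by (auto simp: fun_eq_iff PiE_def extensional_def)
  show "\<forall>S\<in>left_total_rels A B. Sigma A (\<lambda>a\<in>A. S `` {a}) = S"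
    by (auto simp: left_total_rels_def split: if_splits)
  show "Sigma A ` PiE A (\<lambda>_. Pow B - {{}}) \<subseteq> left_total_rels A B"
    by (force simp: left_total_rels_def)
  show "(\<lambda>S. \<lambda>a\<in>A. S `` {a}) ` left_total_rels A B \<subseteq> PiE A (\<lambda>_. Pow B - {{}})"
    by (force simp: left_total_rels_def)
qed

lemma sum_left_total_rels:
  assumes "finite A" "finite B" "B \<noteq> {}"
  shows "(\<Sum>S\<in>left_total_rels A B. (-1::'a::comm_ring_1) ^ card S) = (-1) ^ card A"
proof -
  have "(\<Sum>S\<in>left_total_rels A B. (-1::'a) ^ card S)
      = (\<Sum>g\<in>PiE A (\<lambda>_. Pow B - {{}}). (-1) ^ card (Sigma A g))"
    using bij_betw_Sigma_left_total_rels by (rule sum.reindex_bij_betw[symmetric])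
  also have "\<dots> = (\<Sum>g\<in>PiE A (\<lambda>_. Pow B - {{}}). \<Prod>a\<in>A. (-1) ^ card (g a))"
  proof (rule sum.cong[OF refl])
    fix g assume "g \<in> PiE A (\<lambda>_. Pow B - {{}})"
    then have "card (Sigma A g) = (\<Sum>a\<in>A. card (g a))"
      using assms by (intro card_SigmaI) (auto simp: PiE_iff dest: finite_subset)
    then show "(-1::'a) ^ card (Sigma A g) = (\<Prod>a\<in>A. (-1) ^ card (g a))"
      by (simp add: power_sum)
  qed
  also have "\<dots> = (\<Prod>a\<in>A. \<Sum>T\<in>Pow B - {{}}. (-1) ^ card T)"
    using assms by (intro prod_sum_PiE[symmetric]) auto
  also have "\<dots> = (-1) ^ card A"
    using assms by (simp add: sum_Pow_nonempty_neg_one_power)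
  finally show ?thesis .
qed

lemma sum_Pow_bitotal_rels:
  assumes "finite A" "finite B"
  shows "(\<Sum>B'\<in>Pow B. \<Sum>S\<in>bitotal_rels A B'. f S) = (\<Sum>S\<in>left_total_rels A B. f S)"
proof -
  have "bitotal_rels A B' = {S \<in> left_total_rels A B. snd ` S = B'}" if "B' \<subseteq> B" for B'
    using that by (auto simp: bitotal_rels_def left_total_rels_def intro: rev_image_eqI)
  then have "(\<Sum>B'\<in>Pow B. \<Sum>S\<in>bitotal_rels A B'. f S)
      = (\<Sum>B'\<in>Pow B. \<Sum>S\<in>{S \<in> left_total_rels A B. snd ` S = B'}. f S)"
    by simp
  also have "\<dots> = (\<Sum>S\<in>left_total_rels A B. f S)"
    using assms by (intro sum.group finite_left_total_rels) (auto simp: left_total_rels_def)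
  finally show ?thesis .
qed

lemma sum_bitotal_rels:
  fixes A :: "'a set" and B :: "'b set"
  assumes "finite A" "A \<noteq> {}" "finite B" "B \<noteq> {}"
  shows "(\<Sum>S\<in>bitotal_rels A B. (-1::'c::comm_ring_1) ^ card S) = - ((-1) ^ (card A + card B))"
proof -
  let ?g = "\<lambda>T :: 'b set. \<Sum>S\<in>left_total_rels A T. (-1::'c) ^ card S"
  have "(\<Sum>S\<in>bitotal_rels A B. (-1::'c) ^ card S) = (\<Sum>T\<in>Pow B. (-1) ^ (card B - card T) * ?g T)"
    using assms(3)
    by (intro inclusion_exclusion_mobius[where f = "\<lambda>B. \<Sum>S\<in>bitotal_rels A B. (-1) ^ card S"])
      (simp_all add: sum_Pow_bitotal_rels[OF assms(1)])
  also have "\<dots> = (\<Sum>T\<in>Pow B - {{}}. (-1) ^ (card B - card T) * (-1) ^ card A)"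
  proof -
    have "?g {} = 0"
      using assms(2) by (simp add: left_total_rels_empty)
    moreover have "?g T = (-1) ^ card A" if "T \<in> Pow B - {{}}" for T
      using that assms by (intro sum_left_total_rels) (auto dest: finite_subset)
    ultimately show ?thesis
      using assms(3) by (simp add: sum.remove[of _ "{}"])
  qed
  also have "\<dots> = (\<Sum>T\<in>Pow B - {{}}. (-1) ^ (card B - card T)) * (-1) ^ card A"
    by (simp add: sum_distrib_right)
  also have "(\<Sum>T\<in>Pow B - {{}}. (-1::'c) ^ (card B - card T)) = - ((-1) ^ card B)"
    using sum_Pow_neg_one_power_diff[OF assms(3,4), where 'a='c] assms(3)
    by (simp add: sum.remove[of _ "{}"] eq_neg_iff_add_eq_0 add.commute)
  finally show ?thesis
    by (simp add: power_add)
qed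

section \<open>The Euler characteristic as a sum over cliques\<close>

definition cliques :: "graph \<Rightarrow> nat set set" where
  "cliques G = {C. C \<subseteq> fst G \<and> C \<noteq> {} \<and> (\<forall>a\<in>C. \<forall>b\<in>C. a \<noteq> b \<longrightarrow> {a, b} \<in> snd G)}"

lemma finite_cliques: "finite (fst G) \<Longrightarrow> finite (cliques G)"
  by (rule finite_subset[of _ "Pow (fst G)"]) (auto simp: cliques_def)

lemma euler_char_cliques:
  assumes "finite (fst G)"
  shows "euler_char G = (\<Sum>C\<in>cliques G. - ((-1) ^ card C))"
proof -
  let ?n = "card (fst G)"
  have fiber: "{C \<in> cliques G. card C - 1 = k} =
      {C. C \<subseteq> fst G \<and> card C = k + 1 \<and> (\<forall>a\<in>C. \<forall>b\<in>C. a \<noteq> b \<longrightarrow> {a, b} \<in> snd G)}" for k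
  proof -
    have "C \<noteq> {} \<and> card C - 1 = k \<longleftrightarrow> card C = k + 1" if "C \<subseteq> fst G" for C
    proof -
      have "finite C"
        using assms that by (rule finite_subset[rotated])
      then show ?thesis
        by (cases "card C") auto
    qed
    then show ?thesis
      unfolding cliques_def by blast
  qed
  have "(\<Sum>C\<in>cliques G. - ((-1::int) ^ card C))
      = (\<Sum>k\<le>?n. \<Sum>C\<in>{C \<in> cliques G. card C - 1 = k}. - ((-1) ^ card C))"
  proof (rule sum.group[symmetric, OF finite_cliques[OF assms] finite_atMost])
    show "(\<lambda>C. card C - 1) ` cliques G \<subseteq> {..?n}"
      using assms by (auto simp: cliques_def intro!: le_trans[OF diff_le_self] card_mono)
  qed
  also have "\<dots> = (\<Sum>k\<le>?n. (-1) ^ k * int (num_cliques k G))"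
    unfolding fiber num_cliques_def by (intro sum.cong refl) simp
  finally show ?thesis
    by (simp add: euler_char_def)
qed

lemma euler_char_empty_graph: "euler_char empty_graph = 0"
proof -
  have "cliques empty_graph = {}"
    by (auto simp: cliques_def empty_graph_def)
  then show ?thesis
    by (simp add: euler_char_cliques empty_graph_def)
qed

lemma euler_char_K1: "euler_char K1 = 1"
proof -
  have "cliques K1 = {{0}}"
    by (auto simp: cliques_def K1_def)
  then show ?thesis
    by (simp add: euler_char_cliques K1_def)
qed

lemma sum_image_image_card:
  assumes "inj_on h V" "X \<subseteq> Pow V"
  shows "(\<Sum>C\<in>image h ` X. f (card C)) = (\<Sum>C\<in>X. f (card C))"
proof -
  have "inj_on (image h) X"
    using inj_on_image_Pow[OF assms(1)] assms(2) by (rule inj_on_subset)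
  then have "(\<Sum>C\<in>image h ` X. f (card C)) = (\<Sum>C\<in>X. f (card (h ` C)))"
    by (simp add: sum.reindex)
  also have "\<dots> = (\<Sum>C\<in>X. f (card C))"
  proof (rule sum.cong[OF refl])
    fix C assume "C \<in> X"
    then have "inj_on h C"
      using assms by (blast intro: inj_on_subset)
    then show "f (card (h ` C)) = f (card C)"
      by (simp add: card_image)
  qed
  finally show ?thesis .
qed

definition induced_embedding :: "(nat \<Rightarrow> nat) \<Rightarrow> graph \<Rightarrow> graph \<Rightarrow> bool" where
  "induced_embedding h G G' \<longleftrightarrow> inj_on h (fst G) \<and> h ` fst G \<subseteq> fst G' \<and>
     (\<forall>a\<in>fst G. \<forall>b\<in>fst G. {h a, h b} \<in> snd G' \<longleftrightarrow> {a, b} \<in> snd G)"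

lemma cliques_induced_embedding:
  assumes "induced_embedding h G G'"
  shows "image h ` cliques G = {C \<in> cliques G'. C \<subseteq> h ` fst G}"
proof (intro equalityI subsetI)
  have inj: "inj_on h (fst G)" and into: "h ` fst G \<subseteq> fst G'"
    and edge: "\<And>a b. a \<in> fst G \<Longrightarrow> b \<in> fst G \<Longrightarrow> {h a, h b} \<in> snd G' \<longleftrightarrow> {a, b} \<in> snd G"
    using assms by (auto simp: induced_embedding_def)
  {
    fix C' assume "C' \<in> image h ` cliques G"
    then obtain C where C: "C \<in> cliques G" and C': "C' = h ` C"
      by blast
    have "{h a, h b} \<in> snd G'" if "a \<in> C" "b \<in> C" "h a \<noteq> h b" for a b
    proof -
      have "a \<in> fst G" "b \<in> fst G" "{a, b} \<in> snd G"
        using that C by (auto simp: cliques_def)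
      then show ?thesis
        using edge by blast
    qed
    then have "\<forall>x\<in>C'. \<forall>y\<in>C'. x \<noteq> y \<longrightarrow> {x, y} \<in> snd G'"
      using C' by blast
    moreover have "C' \<subseteq> h ` fst G" "C' \<noteq> {}"
      using C C' by (auto simp: cliques_def)
    ultimately show "C' \<in> {C \<in> cliques G'. C \<subseteq> h ` fst G}"
      using into by (auto simp: cliques_def)
  next
    fix C' assume C': "C' \<in> {C \<in> cliques G'. C \<subseteq> h ` fst G}"
    define C where "C = {a \<in> fst G. h a \<in> C'}"
    have "h ` C = C'"
      using C' by (auto simp: C_def)
    moreover have "C \<noteq> {}"
      using C' \<open>h ` C = C'\<close> by (auto simp: cliques_def)
    moreover have "{a, b} \<in> snd G" if "a \<in> C" "b \<in> C" "a \<noteq> b" for a b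
    proof -
      have "h a \<noteq> h b"
        using that inj by (auto simp: C_def dest: inj_onD)
      then have "a \<in> fst G" "b \<in> fst G" "{h a, h b} \<in> snd G'"
        using that C' by (auto simp: C_def cliques_def)
      then show ?thesis
        using edge by blast
    qed
    ultimately show "C' \<in> image h ` cliques G"
      unfolding cliques_def C_def by blast
  }
qed

lemma euler_char_induced_embedding:
  assumes "induced_embedding h G G'" "finite (fst G)"
  shows "euler_char G = (\<Sum>C\<in>{C \<in> cliques G'. C \<subseteq> h ` fst G}. - ((-1) ^ card C))"
proof -
  have inj: "inj_on h (fst G)" and sub: "cliques G \<subseteq> Pow (fst G)"
    using assms(1) by (auto simp: induced_embedding_def cliques_def)
  have "euler_char G = (\<Sum>C\<in>image h ` cliques G. - ((-1) ^ card C))"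
    using sum_image_image_card[OF inj sub, of "\<lambda>n. - ((-1::int) ^ n)"]
    by (simp add: euler_char_cliques assms(2))
  then show ?thesis
    by (simp only: cliques_induced_embedding[OF assms(1)])
qed

lemma euler_char_iso:
  assumes "graph_iso G H" "finite (fst G)"
  shows "euler_char G = euler_char H"
proof -
  obtain f where f: "bij_betw f (fst G) (fst H)"
    and edges: "\<forall>a\<in>fst G. \<forall>b\<in>fst G. {a, b} \<in> snd G \<longleftrightarrow> {f a, f b} \<in> snd H"
    using assms(1) unfolding graph_iso_def by blast
  have "induced_embedding f G H"
    using f edges by (auto simp: induced_embedding_def bij_betw_def)
  then have "euler_char G = (\<Sum>C\<in>{C \<in> cliques H. C \<subseteq> f ` fst G}. - ((-1) ^ card C))"
    using assms(2) by (rule euler_char_induced_embedding)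
  also have "{C \<in> cliques H. C \<subseteq> f ` fst G} = cliques H"
    using f by (auto simp: cliques_def bij_betw_def)
  also have "(\<Sum>C\<in>cliques H. - ((-1) ^ card C)) = euler_char H"
    using f assms(2) bij_betw_finite by (metis euler_char_cliques)
  finally show ?thesis .
qed

section \<open>Disjoint union\<close>

lemma doubleton_in_image_image_iff:
  assumes "inj h"
  shows "{h a, h b} \<in> image h ` E \<longleftrightarrow> {a, b} \<in> E"
proof
  assume "{h a, h b} \<in> image h ` E"
  then obtain e where e: "e \<in> E" "{h a, h b} = h ` e"
    by blast
  then have "h ` e = h ` {a, b}"
    by simp
  then have "e = {a, b}"
    by (simp only: inj_image_eq_iff[OF assms])
  with e show "{a, b} \<in> E"
    by simp
next
  assume "{a, b} \<in> E"
  then show "{h a, h b} \<in> image h ` E"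
    using image_eqI[of "{h a, h b}" "image h" "{a, b}"] by simp
qed

lemma doubleton_in_image_imageD: "{x, y} \<in> image h ` E \<Longrightarrow> x \<in> range h \<and> y \<in> range h"
  by auto

lemma induced_embedding_image:
  assumes "inj h" "h ` fst G \<subseteq> fst G'" "snd G' = image h ` snd G \<union> image k ` F"
    and "range h \<inter> range k = {}"
  shows "induced_embedding h G G'"
proof -
  have "{h a, h b} \<notin> image k ` F" for a b
    using assms(4) by blast
  then show ?thesis
    using assms(1-3)
    by (simp add: induced_embedding_def doubleton_in_image_image_iff inj_on_subset[of h UNIV])
qed

lemma range_double_disjoint: "range (\<lambda>x::nat. 2 * x) \<inter> range (\<lambda>x. 2 * x + 1) = {}"
  by auto presburger

lemma induced_embedding_dunion_left: "induced_embedding (\<lambda>x. 2 * x) G (G \<oplus>\<^sub>g H)"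
  by (rule induced_embedding_image[where k = "\<lambda>x. 2 * x + 1" and F = "snd H"])
    (use range_double_disjoint in \<open>auto simp: inj_def dunion_def\<close>)

lemma induced_embedding_dunion_right: "induced_embedding (\<lambda>x. 2 * x + 1) H (G \<oplus>\<^sub>g H)"
  by (rule induced_embedding_image[where k = "\<lambda>x. 2 * x" and F = "snd G"])
    (use range_double_disjoint in \<open>auto simp: inj_def dunion_def\<close>)

lemma cliques_dunion_cases:
  assumes "C \<in> cliques (G \<oplus>\<^sub>g H)"
  shows "C \<subseteq> (\<lambda>x. 2 * x) ` fst G \<or> C \<subseteq> (\<lambda>x. 2 * x + 1) ` fst H"
proof (rule ccontr)
  let ?ev = "\<lambda>x::nat. 2 * x" and ?od = "\<lambda>x::nat. 2 * x + 1"
  assume "\<not> ?thesis"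
  then obtain x y where xy: "x \<in> C" "y \<in> C" "x \<notin> ?ev ` fst G" "y \<notin> ?od ` fst H"
    by blast
  moreover have "C \<subseteq> ?ev ` fst G \<union> ?od ` fst H"
    using assms by (simp add: cliques_def dunion_def)
  ultimately have x: "x \<in> range ?od" and y: "y \<in> range ?ev"
    by auto
  then have "y \<noteq> x"
    using range_double_disjoint by blast
  then have "{y, x} \<in> image ?ev ` snd G \<union> image ?od ` snd H"
    using assms xy(1,2) unfolding cliques_def dunion_def by simp
  with x y show False
    using range_double_disjoint by (auto dest!: doubleton_in_image_imageD)
qed

lemma finite_fst_dunion: "finite (fst G) \<Longrightarrow> finite (fst H) \<Longrightarrow> finite (fst (G \<oplus>\<^sub>g H))"
  by (simp add: dunion_def)

lemma euler_char_dunion: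
  assumes "finite (fst G)" "finite (fst H)"
  shows "euler_char (G \<oplus>\<^sub>g H) = euler_char G + euler_char H"
proof -
  let ?U = "G \<oplus>\<^sub>g H"
  let ?L = "{C \<in> cliques ?U. C \<subseteq> (\<lambda>x. 2 * x) ` fst G}"
    and ?R = "{C \<in> cliques ?U. C \<subseteq> (\<lambda>x. 2 * x + 1) ` fst H}"
  have split: "cliques ?U = ?L \<union> ?R"
    using cliques_dunion_cases by blast
  have "C = {}" if "C \<in> ?L" "C \<in> ?R" for C
    using that range_double_disjoint by blast
  then have "?L \<inter> ?R = {}"
    by (auto simp: cliques_def)
  moreover have "finite (cliques ?U)"
    using assms by (simp add: finite_cliques finite_fst_dunion)
  ultimately have "(\<Sum>C\<in>cliques ?U. - ((-1::int) ^ card C))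
      = (\<Sum>C\<in>?L. - ((-1) ^ card C)) + (\<Sum>C\<in>?R. - ((-1) ^ card C))"
    by (subst split) (intro sum.union_disjoint, auto)
  then show ?thesis
    using assms euler_char_induced_embedding[OF induced_embedding_dunion_left]
      euler_char_induced_embedding[OF induced_embedding_dunion_right]
    by (simp add: euler_char_cliques finite_fst_dunion)
qed

section \<open>Strong product\<close>

lemma sprod_edge_iff:
  assumes "x \<in> fst G \<times> fst H" "y \<in> fst G \<times> fst H" "x \<noteq> y"
  shows "{prod_encode x, prod_encode y} \<in> snd (G \<boxtimes>\<^sub>g H) \<longleftrightarrow>
    (fst x = fst y \<or> {fst x, fst y} \<in> snd G) \<and> (snd x = snd y \<or> {snd x, snd y} \<in> snd H)"
    (is "_ \<longleftrightarrow> ?adj x y")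
proof
  assume "{prod_encode x, prod_encode y} \<in> snd (G \<boxtimes>\<^sub>g H)"
  then obtain a b c d where eq: "{prod_encode x, prod_encode y} = {prod_encode (a, b), prod_encode (c, d)}"
    and adj: "?adj (a, b) (c, d)"
    by (auto simp: sprod_def)
  have "?adj (c, d) (a, b)"
    using adj by (auto simp: insert_commute)
  moreover have "x = (a, b) \<and> y = (c, d) \<or> x = (c, d) \<and> y = (a, b)"
    using eq by (auto simp: doubleton_eq_iff prod_encode_eq)
  ultimately show "?adj x y"
    using adj by blast
next
  assume "?adj x y"
  with assms show "{prod_encode x, prod_encode y} \<in> snd (G \<boxtimes>\<^sub>g H)"
    by (cases x, cases y) (auto simp: sprod_def)
qed

lemma image_prod_encode_in_cliques_sprod_iff:
  assumes "S \<subseteq> fst G \<times> fst H"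
  shows "prod_encode ` S \<in> cliques (G \<boxtimes>\<^sub>g H) \<longleftrightarrow> fst ` S \<in> cliques G \<and> snd ` S \<in> cliques H"
proof -
  \<comment> \<open>Read reflexively, adjacency in the strong product is the conjunction of adjacency
    in the two factors, so the clique condition splits over the projections.\<close>
  let ?adj = "\<lambda>K a c. a = c \<or> {a, c} \<in> snd K"
  have "fst (G \<boxtimes>\<^sub>g H) = prod_encode ` (fst G \<times> fst H)"
    by (simp add: sprod_def)
  then have "prod_encode ` S \<in> cliques (G \<boxtimes>\<^sub>g H) \<longleftrightarrow> S \<noteq> {} \<and>
      (\<forall>x\<in>S. \<forall>y\<in>S. x \<noteq> y \<longrightarrow> {prod_encode x, prod_encode y} \<in> snd (G \<boxtimes>\<^sub>g H))"
    using assms by (auto simp: cliques_def prod_encode_eq)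
  also have "\<dots> \<longleftrightarrow> S \<noteq> {} \<and> (\<forall>x\<in>S. \<forall>y\<in>S. ?adj G (fst x) (fst y) \<and> ?adj H (snd x) (snd y))"
  proof -
    have "{prod_encode x, prod_encode y} \<in> snd (G \<boxtimes>\<^sub>g H) \<longleftrightarrow>
        ?adj G (fst x) (fst y) \<and> ?adj H (snd x) (snd y)"
      if "x \<in> S" "y \<in> S" "x \<noteq> y" for x y
      using that assms by (intro sprod_edge_iff) auto
    then show ?thesis
      by (metis (no_types, lifting))
  qed
  also have "\<dots> \<longleftrightarrow> S \<noteq> {} \<and> (\<forall>a\<in>fst ` S. \<forall>c\<in>fst ` S. ?adj G a c) \<and>
      (\<forall>b\<in>snd ` S. \<forall>d\<in>snd ` S. ?adj H b d)"
    by (simp add: ball_conj_distrib)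
  also have "\<dots> \<longleftrightarrow> fst ` S \<in> cliques G \<and> snd ` S \<in> cliques H"
    using assms by (auto simp: cliques_def)
  finally show ?thesis .
qed

lemma subset_times_if_projections_in_cliques:
  assumes "fst ` S \<in> cliques G" "snd ` S \<in> cliques H"
  shows "S \<subseteq> fst G \<times> fst H"
proof -
  have "fst ` S \<times> snd ` S \<subseteq> fst G \<times> fst H"
    using assms by (auto simp: cliques_def)
  with subset_fst_snd show ?thesis
    by (rule subset_trans)
qed

lemma cliques_sprod:
  "cliques (G \<boxtimes>\<^sub>g H) = image prod_encode ` {S. fst ` S \<in> cliques G \<and> snd ` S \<in> cliques H}"
proof (intro equalityI subsetI)
  fix C assume C: "C \<in> cliques (G \<boxtimes>\<^sub>g H)"
  define S where "S = {x \<in> fst G \<times> fst H. prod_encode x \<in> C}"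
  have S: "S \<subseteq> fst G \<times> fst H"
    by (auto simp: S_def)
  have "prod_encode ` S = C"
    using C by (auto simp: S_def cliques_def sprod_def)
  with C have "fst ` S \<in> cliques G \<and> snd ` S \<in> cliques H"
    using image_prod_encode_in_cliques_sprod_iff[OF S] by simp
  with \<open>prod_encode ` S = C\<close>
  show "C \<in> image prod_encode ` {S. fst ` S \<in> cliques G \<and> snd ` S \<in> cliques H}"
    by blast
next
  fix C assume "C \<in> image prod_encode ` {S. fst ` S \<in> cliques G \<and> snd ` S \<in> cliques H}"
  then obtain S where "C = prod_encode ` S" "fst ` S \<in> cliques G" "snd ` S \<in> cliques H"
    by blast
  then show "C \<in> cliques (G \<boxtimes>\<^sub>g H)"
    by (simp add: image_prod_encode_in_cliques_sprod_iff subset_times_if_projections_in_cliques)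
qed

lemma finite_fst_sprod: "finite (fst G) \<Longrightarrow> finite (fst H) \<Longrightarrow> finite (fst (G \<boxtimes>\<^sub>g H))"
  by (simp add: sprod_def)

lemma euler_char_sprod:
  assumes "finite (fst G)" "finite (fst H)"
  shows "euler_char (G \<boxtimes>\<^sub>g H) = euler_char G * euler_char H"
proof -
  let ?Q = "{S. fst ` S \<in> cliques G \<and> snd ` S \<in> cliques H}"
  have Q: "?Q \<subseteq> Pow (fst G \<times> fst H)"
    by (auto dest: subset_times_if_projections_in_cliques)
  have "finite (fst (G \<boxtimes>\<^sub>g H))"
    using assms by (rule finite_fst_sprod)
  then have "euler_char (G \<boxtimes>\<^sub>g H) = (\<Sum>C\<in>cliques (G \<boxtimes>\<^sub>g H). - ((-1) ^ card C))"
    by (rule euler_char_cliques)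
  also have "\<dots> = (\<Sum>C\<in>image prod_encode ` ?Q. - ((-1) ^ card C))"
    by (simp only: cliques_sprod)
  also have "\<dots> = (\<Sum>S\<in>?Q. - ((-1) ^ card S))"
    using inj_on_subset[OF inj_prod_encode subset_UNIV] Q by (rule sum_image_image_card)
  also have "\<dots> = (\<Sum>p\<in>cliques G \<times> cliques H.
      \<Sum>S\<in>{S \<in> ?Q. (fst ` S, snd ` S) = p}. - ((-1) ^ card S))"
    using assms finite_subset[OF Q] by (intro sum.group[symmetric] finite_cliques finite_SigmaI) auto
  also have "\<dots> = (\<Sum>(A, B)\<in>cliques G \<times> cliques H. - ((-1) ^ card A) * - ((-1) ^ card B))"
  proof (rule sum.cong[OF refl], clarify)
    fix A B assume AB: "A \<in> cliques G" "B \<in> cliques H"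
    then have "{S \<in> ?Q. (fst ` S, snd ` S) = (A, B)} = bitotal_rels A B"
      unfolding bitotal_rels_eq by blast
    moreover have "finite A" "A \<noteq> {}" "finite B" "B \<noteq> {}"
      using AB assms by (auto simp: cliques_def dest: finite_subset)
    ultimately show "(\<Sum>S\<in>{S \<in> ?Q. (fst ` S, snd ` S) = (A, B)}. - ((-1::int) ^ card S)) =
        - ((-1) ^ card A) * - ((-1) ^ card B)"
      by (simp add: sum_negf sum_bitotal_rels power_add)
  qed
  also have "\<dots> = euler_char G * euler_char H"
    using assms by (simp add: euler_char_cliques sum_product sum.cartesian_product)
  finally show ?thesis .
qed

lemma wf_gg_finite: "wf_gg p \<Longrightarrow> finite (fst (fst p)) \<and> finite (fst (snd p))"
  by (simp add: wf_gg_def wf_graph_def)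

lemma gg_chi_add: "wf_gg p \<Longrightarrow> wf_gg q \<Longrightarrow> gg_chi (gg_add p q) = gg_chi p + gg_chi q"
  by (simp add: wf_gg_finite gg_chi_def gg_add_def euler_char_dunion)

lemma gg_chi_mul: "wf_gg p \<Longrightarrow> wf_gg q \<Longrightarrow> gg_chi (gg_mul p q) = gg_chi p * gg_chi q"
  by (simp add: wf_gg_finite gg_chi_def gg_mul_def euler_char_dunion euler_char_sprod
      finite_fst_sprod algebra_simps)

lemma gg_chi_eq_if_gg_eq:
  assumes "wf_gg p" "wf_gg q" "gg_eq p q"
  shows "gg_chi p = gg_chi q"
proof -
  obtain K where "finite (fst K)"
    and iso: "graph_iso (fst p \<oplus>\<^sub>g snd q \<oplus>\<^sub>g K) (snd p \<oplus>\<^sub>g fst q \<oplus>\<^sub>g K)"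
    using assms(3) by (auto simp: gg_eq_def wf_graph_def)
  moreover note wf_gg_finite[OF assms(1)] wf_gg_finite[OF assms(2)]
  ultimately have "euler_char (fst p \<oplus>\<^sub>g snd q \<oplus>\<^sub>g K) = euler_char (snd p \<oplus>\<^sub>g fst q \<oplus>\<^sub>g K)"
    by (simp add: euler_char_iso finite_fst_dunion)
  with \<open>finite (fst K)\<close> show ?thesis
    using wf_gg_finite[OF assms(1)] wf_gg_finite[OF assms(2)]
    by (simp add: gg_chi_def euler_char_dunion finite_fst_dunion)
qed

theorem mainTheorem3:
  shows "(\<forall>p q. wf_gg p \<longrightarrow> wf_gg q \<longrightarrow> gg_eq p q \<longrightarrow> gg_chi p = gg_chi q)
    \<and> gg_chi gg_zero = 0
    \<and> gg_chi gg_one = 1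
    \<and> (\<forall>p q. wf_gg p \<longrightarrow> wf_gg q \<longrightarrow> gg_chi (gg_add p q) = gg_chi p + gg_chi q)
    \<and> (\<forall>p q. wf_gg p \<longrightarrow> wf_gg q \<longrightarrow> gg_chi (gg_mul p q) = gg_chi p * gg_chi q)"
proof (intro conjI allI impI)
  fix p q assume "wf_gg p" "wf_gg q"
  then show "gg_eq p q \<Longrightarrow> gg_chi p = gg_chi q"
    and "gg_chi (gg_add p q) = gg_chi p + gg_chi q"
    and "gg_chi (gg_mul p q) = gg_chi p * gg_chi q"
    by (simp_all add: gg_chi_eq_if_gg_eq gg_chi_add gg_chi_mul)
next
  show "gg_chi gg_zero = 0"
    by (simp add: gg_chi_def gg_zero_def euler_char_empty_graph)
  show "gg_chi gg_one = 1"
    by (simp add: gg_chi_def gg_one_def euler_char_empty_graph euler_char_K1)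
qed

end
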